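(* Let the loss $f(\cdot,z)$ be convex and $\beta$-smooth for all $z\in\mathcal{Z}$, and run full-batch GD for $T$ iterations with $\eta_t=1/(2\beta)$ for all $t\in\{1,\dots,T\}$. Then $$|\epsilon_{\mathrm{gen}}|\le8\left(\frac1n+\frac{2T}{n^2}\right)\left(3\beta\,\mathbb{E}[\|W_1-W^*_S\|_2^2]+T\epsilon_{\mathbf{c}}\right),$$ and $$\epsilon_{\mathrm{excess}}\le8\left(\frac1n+\frac{2T}{n^2}\right)\left(3\beta\,\mathbb{E}[\|W_1-W^*_S\|_2^2]+T\epsilon_{\mathbf{c}}\right)+\frac{3\beta\,\mathbb{E}[\|W_1-W^*_S\|_2^2]}{T}.$$
   Context: Let $\mathcal{D}$ be a distribution on $\mathcal{Z}$ and $z_1,\dots,z_n$ i.i.d. from $\mathcal{D}$; $S=(z_1,\dots,z_n)$. The loss $f:\mathbb{R}^d\times\mathcal{Z}\to[0,\infty)$ is non-negative; $\beta$-smooth means $\|\nabla f(w,z)-\nabla f(u,z)\|_2\le\beta\|w-u\|_2$. $R(w)=\mathbb{E}_{Z\sim\mathcal{D}}[f(w,Z)]$ with minimum value $R^*=R(w^* )$, $w^*\in\arg\min_w R(w)$ (assumed to exist); $R_S(w)=\frac1n\sum_j f(w,z_j)$, $W^*_S$ a minimizer of $R_S$ (assumed to exist). Full-batch GD: from a fixed $W_1$, $W_{t+1}=W_t-\frac{\eta_t}{n}\sum_{j=1}^n\nabla f(W_t,z_j)$, $t=1,\dots,T$, output $A(S)=W_{T+1}$. Definitions: $\epsilon_{\mathrm{gen}}=\mathbb{E}[R(A(S))-R_S(A(S))]$;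 excess risk $\epsilon_{\mathrm{excess}}=\mathbb{E}[R(A(S))]-R^*$; $\epsilon_{\mathbf{c}}=\mathbb{E}[R_S(W^*_S)]$. *)

theory Defs
  imports "HOL-Probability.Probability"
begin

definition pop_risk :: "'z measure \<Rightarrow> ('a \<Rightarrow> 'z \<Rightarrow> real) \<Rightarrow> 'a \<Rightarrow> real" where
  "pop_risk D f w = (\<integral>z. f w z \<partial>D)"

text \<open>Empirical risk R_S(w) = (1/n) sum_{j} f(w, z_j); the sample S = (z_1..z_n)
  is represented as a function on indices 0..n-1.\<close>
definition emp_risk :: "nat \<Rightarrow> ('a \<Rightarrow> 'z \<Rightarrow> real) \<Rightarrow> (nat \<Rightarrow> 'z) \<Rightarrow> 'a \<Rightarrow> real" where
  "emp_risk n f S w = (\<Sum>j<n. f w (S j)) / real n"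

text \<open>Full-batch GD: gd g eta n W1 S t is the iterate W_{t+1}
  (so gd ... 0 = W_1 and the output after T steps is gd ... T = W_{T+1}).
  g is the gradient of f in its first argument; eta t is the step size at step t.\<close>
fun gd :: "('a::real_vector \<Rightarrow> 'z \<Rightarrow> 'a) \<Rightarrow> (nat \<Rightarrow> real) \<Rightarrow> nat \<Rightarrow> 'a \<Rightarrow> (nat \<Rightarrow> 'z) \<Rightarrow> nat \<Rightarrow> 'a" where
  "gd g eta n W1 S 0 = W1"
| "gd g eta n W1 S (Suc t) =
     gd g eta n W1 S t - (eta (Suc t) / real n) *\<^sub>R (\<Sum>j<n. g (gd g eta n W1 S t) (S j))"

end

theory Submission
  imports Defs
begin

(* Gradient descent with step 1/(2 beta) on the convex, beta-smooth empirical risk decreases it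
   monotonically, and the usual telescoping of ||W_t - W*_S||^2 bounds both the empirical risk of
   the last iterate and the sum of the empirical risks along the trajectory in terms of
   R_S(W*_S) and beta ||W_1 - W*_S||^2.
   The generalization gap is the average over i of E[f(A(S^(i)), z_i) - f(A(S), z_i)], where S^(i)
   replaces z_i by an independent ghost sample. The gradient step of the part of the objective
   shared by S and S^(i) is nonexpansive (co-coercivity of smooth convex gradients), so the two
   trajectories separate only through the gradients at z_i and at the ghost sample, and the
   self-bounding inequality ||grad f||^2 <= 2 beta f turns these into losses along the
   trajectories, which are controlled by the optimization bounds. *)

section \<open>First-order inequalities for smooth convex functions\<close>

definition convex_grad :: "('a::real_inner \<Rightarrow> real) \<Rightarrow> ('a \<Rightarrow> 'a) \<Rightarrow> bool" where
  "convex_grad F G \<longleftrightarrow> (\<forall>x y. F x + G x \<bullet> (y - x) \<le> F y)"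

definition smooth_grad :: "real \<Rightarrow> ('a::real_inner \<Rightarrow> real) \<Rightarrow> ('a \<Rightarrow> 'a) \<Rightarrow> bool" where
  "smooth_grad \<beta> F G \<longleftrightarrow> (\<forall>x y. F y \<le> F x + G x \<bullet> (y - x) + \<beta> / 2 * (norm (y - x))\<^sup>2)"

lemma convex_gradD: "convex_grad F G \<Longrightarrow> F x + G x \<bullet> (y - x) \<le> F y"
  by (simp add: convex_grad_def)

lemma smooth_gradD: "smooth_grad \<beta> F G \<Longrightarrow> F y \<le> F x + G x \<bullet> (y - x) + \<beta> / 2 * (norm (y - x))\<^sup>2"
  by (simp add: smooth_grad_def)

lemma has_real_derivative_along_line:
  fixes \<phi> :: "'a::real_inner \<Rightarrow> real"
  assumes "(\<phi> has_derivative (\<lambda>h. G \<bullet> h)) (at (x + t *\<^sub>R d))"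
  shows "((\<lambda>s. \<phi> (x + s *\<^sub>R d)) has_real_derivative (G \<bullet> d)) (at t)"
proof -
  have "((\<lambda>s. x + s *\<^sub>R d) has_derivative (\<lambda>s. s *\<^sub>R d)) (at t)"
    by (auto intro!: derivative_eq_intros)
  from has_derivative_compose[OF this assms]
  have "((\<lambda>s. \<phi> (x + s *\<^sub>R d)) has_derivative (\<lambda>s. G \<bullet> (s *\<^sub>R d))) (at t)" .
  then show ?thesis
    unfolding has_field_derivative_def
    by (rule has_derivative_eq_rhs) (auto simp: fun_eq_iff mult.commute)
qed

lemma lipschitz_gradient_imp_smooth_grad:
  fixes \<phi> :: "'a::real_inner \<Rightarrow> real"
  assumes deriv: "\<And>w. (\<phi> has_derivative (\<lambda>h. G w \<bullet> h)) (at w)"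
    and lipschitz: "\<And>w u. norm (G w - G u) \<le> \<beta> * norm (w - u)"
  shows "smooth_grad \<beta> \<phi> G"
  unfolding smooth_grad_def
proof (intro allI)
  fix x y :: 'a
  define d where "d = y - x"
  define \<psi> where "\<psi> t = \<phi> (x + t *\<^sub>R d) - t * (G x \<bullet> d) - \<beta> / 2 * t\<^sup>2 * (norm d)\<^sup>2" for t
  have "\<psi> 1 \<le> \<psi> 0"
  proof (rule DERIV_nonpos_imp_nonincreasing[of 0 1 \<psi>])
    fix t :: real assume t: "0 \<le> t" "t \<le> 1"
    have "((\<lambda>s. \<phi> (x + s *\<^sub>R d)) has_real_derivative (G (x + t *\<^sub>R d) \<bullet> d)) (at t)"
      by (rule has_real_derivative_along_line) (rule deriv)
    then have "(\<psi> has_real_derivative (G (x + t *\<^sub>R d) \<bullet> d - G x \<bullet> d - \<beta> / 2 * (2 * t) * (norm d)\<^sup>2)) (at t)"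
      unfolding \<psi>_def by (auto intro!: derivative_eq_intros)
    moreover have "(G (x + t *\<^sub>R d) - G x) \<bullet> d \<le> \<beta> * t * (norm d)\<^sup>2"
    proof -
      have "(G (x + t *\<^sub>R d) - G x) \<bullet> d \<le> norm (G (x + t *\<^sub>R d) - G x) * norm d"
        by (rule norm_cauchy_schwarz)
      also have "\<dots> \<le> \<beta> * norm (t *\<^sub>R d) * norm d"
        using lipschitz[of "x + t *\<^sub>R d" x] by (intro mult_right_mono) auto
      finally show ?thesis using t by (simp add: power2_eq_square mult.assoc)
    qed
    ultimately show "\<exists>y. (\<psi> has_real_derivative y) (at t) \<and> y \<le> 0"
      by (auto simp: inner_diff_left)
  qed simp
  then show "\<phi> y \<le> \<phi> x + G x \<bullet> (y - x) + \<beta> / 2 * (norm (y - x))\<^sup>2"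
    unfolding \<psi>_def d_def by simp
qed

lemma convex_on_imp_convex_grad:
  fixes \<phi> :: "'a::real_inner \<Rightarrow> real"
  assumes deriv: "\<And>w. (\<phi> has_derivative (\<lambda>h. G w \<bullet> h)) (at w)"
    and convex: "convex_on UNIV \<phi>"
  shows "convex_grad \<phi> G"
  unfolding convex_grad_def
proof (intro allI)
  fix x y :: 'a
  define d where "d = y - x"
  define \<psi> where "\<psi> t = \<phi> (x + t *\<^sub>R d)" for t
  have "convex_on UNIV \<psi>"
  proof (rule convex_onI)
    fix t u v :: real assume t: "0 < t" "t < 1"
    have "x + ((1 - t) * u + t * v) *\<^sub>R d = (1 - t) *\<^sub>R (x + u *\<^sub>R d) + t *\<^sub>R (x + v *\<^sub>R d)"
      by (simp add: algebra_simps)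
    then show "\<psi> ((1 - t) *\<^sub>R u + t *\<^sub>R v) \<le> (1 - t) * \<psi> u + t * \<psi> v"
      unfolding \<psi>_def using convex_onD[OF convex, of t "x + u *\<^sub>R d" "x + v *\<^sub>R d"] t by simp
  qed simp
  moreover have "(\<psi> has_real_derivative (G x \<bullet> d)) (at 0)"
    unfolding \<psi>_def using has_real_derivative_along_line[of \<phi> "G x" x 0 d] deriv by simp
  ultimately have "G x \<bullet> d * (1 - 0) \<le> \<psi> 1 - \<psi> 0"
    by (intro convex_on_imp_above_tangent) auto
  then show "\<phi> x + G x \<bullet> (y - x) \<le> \<phi> y"
    unfolding \<psi>_def d_def by simp
qed

lemma smooth_grad_norm_sq_le:
  fixes F :: "'a::real_inner \<Rightarrow> real"
  assumes smooth: "smooth_grad \<beta> F G" and beta: "\<beta> > 0" and lower: "\<And>y. m \<le> F y"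
  shows "(norm (G x))\<^sup>2 \<le> 2 * \<beta> * (F x - m)"
proof -
  have "m \<le> F (x - (1 / \<beta>) *\<^sub>R G x)" by (rule lower)
  also have "\<dots> \<le> F x + G x \<bullet> (- (1 / \<beta>) *\<^sub>R G x) + \<beta> / 2 * (norm (- (1 / \<beta>) *\<^sub>R G x))\<^sup>2"
    using smooth_gradD[OF smooth, of "x - (1 / \<beta>) *\<^sub>R G x" x] by simp
  also have "\<dots> = F x - (norm (G x))\<^sup>2 / (2 * \<beta>)"
    using beta unfolding power2_norm_eq_inner by (simp add: power2_eq_square field_simps)
  finally show ?thesis using beta by (simp add: field_simps)
qed

lemma convex_smooth_grad_gap:
  fixes F :: "'a::real_inner \<Rightarrow> real"
  assumes convex: "convex_grad F G" and smooth: "smooth_grad L F G" and L: "L > 0"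
  shows "F x + G x \<bullet> (y - x) + (norm (G y - G x))\<^sup>2 / (2 * L) \<le> F y"
proof -
  \<comment> \<open>The tilted function H is minimal at x.\<close>
  define H where "H z = F z - G x \<bullet> z" for z
  have "smooth_grad L H (\<lambda>z. G z - G x)"
    using smooth unfolding smooth_grad_def H_def by (simp add: inner_diff_left inner_diff_right algebra_simps)
  moreover have "H x \<le> H z" for z
    using convex_gradD[OF convex, of x z] unfolding H_def by (simp add: inner_diff_right)
  ultimately have "(norm (G y - G x))\<^sup>2 \<le> 2 * L * (H y - H x)"
    by (rule smooth_grad_norm_sq_le[OF _ L])
  then show ?thesis
    using L unfolding H_def by (simp add: field_simps inner_diff_right)
qed

lemma convex_smooth_grad_cocoercive:
  fixes F :: "'a::real_inner \<Rightarrow> real"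
  assumes "convex_grad F G" and "smooth_grad L F G" and "L > 0"
  shows "(norm (G x - G y))\<^sup>2 / L \<le> (G x - G y) \<bullet> (x - y)"
proof -
  have "F x + G x \<bullet> (y - x) + (norm (G x - G y))\<^sup>2 / (2 * L) \<le> F y"
    and "F y + G y \<bullet> (x - y) + (norm (G x - G y))\<^sup>2 / (2 * L) \<le> F x"
    using convex_smooth_grad_gap[OF assms, of x y] convex_smooth_grad_gap[OF assms, of y x]
    by (simp_all add: norm_minus_commute)
  moreover have "(G x - G y) \<bullet> (x - y) = - (G x \<bullet> (y - x)) - G y \<bullet> (x - y)"
    by (simp add: inner_diff_left inner_diff_right algebra_simps)
  ultimately show ?thesis by (simp add: field_simps)
qed

lemma gradient_step_nonexpansive:
  fixes F :: "'a::real_inner \<Rightarrow> real"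
  assumes "convex_grad F G" and "smooth_grad L F G" and "L > 0" and \<eta>: "0 \<le> \<eta>" "\<eta> \<le> 2 / L"
  shows "norm ((x - \<eta> *\<^sub>R G x) - (y - \<eta> *\<^sub>R G y)) \<le> norm (x - y)"
proof -
  define \<Delta> where "\<Delta> = G x - G y"
  have cocoercive: "(norm \<Delta>)\<^sup>2 / L \<le> \<Delta> \<bullet> (x - y)"
    unfolding \<Delta>_def using assms(1-3) by (rule convex_smooth_grad_cocoercive)
  have "(norm ((x - \<eta> *\<^sub>R G x) - (y - \<eta> *\<^sub>R G y)))\<^sup>2
      = (norm (x - y))\<^sup>2 - 2 * \<eta> * (\<Delta> \<bullet> (x - y)) + \<eta>\<^sup>2 * (norm \<Delta>)\<^sup>2"
    unfolding \<Delta>_def power2_norm_eq_inner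
    by (simp add: inner_diff_left inner_diff_right inner_commute algebra_simps power2_eq_square)
  also have "\<dots> \<le> (norm (x - y))\<^sup>2 - 2 * \<eta> * ((norm \<Delta>)\<^sup>2 / L) + \<eta>\<^sup>2 * (norm \<Delta>)\<^sup>2"
    using mult_left_mono[OF cocoercive, of "2 * \<eta>"] \<eta> by simp
  also have "\<dots> = (norm (x - y))\<^sup>2 - \<eta> * (2 / L - \<eta>) * (norm \<Delta>)\<^sup>2"
    by (simp add: algebra_simps power2_eq_square)
  also have "\<dots> \<le> (norm (x - y))\<^sup>2"
    using \<eta> by simp
  finally show ?thesis by (simp add: power_mono_iff)
qed

lemma convex_smooth_grad_abs_diff_le:
  fixes F :: "'a::real_inner \<Rightarrow> real"
  assumes "convex_grad F G" and "smooth_grad \<beta> F G" and "\<beta> \<ge> 0"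
  shows "\<bar>F y - F x\<bar> \<le> norm (G x) * norm (y - x) + \<beta> / 2 * (norm (y - x))\<^sup>2"
proof -
  have "\<bar>G x \<bullet> (y - x)\<bar> \<le> norm (G x) * norm (y - x)"
    by (rule Cauchy_Schwarz_ineq2)
  then show ?thesis
    using convex_gradD[OF assms(1), of x y] smooth_gradD[OF assms(2), of y x] assms(3)
    by (simp add: abs_le_iff)
qed

lemma convex_grad_sum:
  fixes F :: "'j \<Rightarrow> 'a::real_inner \<Rightarrow> real"
  assumes "\<And>j. j \<in> J \<Longrightarrow> convex_grad (F j) (G j)" and "\<And>j. j \<in> J \<Longrightarrow> 0 \<le> c j"
  shows "convex_grad (\<lambda>x. \<Sum>j\<in>J. c j * F j x) (\<lambda>x. \<Sum>j\<in>J. c j *\<^sub>R G j x)"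
  unfolding convex_grad_def
proof (intro allI)
  fix x y :: 'a
  have "(\<Sum>j\<in>J. c j * F j x) + (\<Sum>j\<in>J. c j *\<^sub>R G j x) \<bullet> (y - x)
      = (\<Sum>j\<in>J. c j * (F j x + G j x \<bullet> (y - x)))"
    by (simp add: inner_sum_left sum.distrib distrib_left)
  also have "\<dots> \<le> (\<Sum>j\<in>J. c j * F j y)"
    using assms by (intro sum_mono mult_left_mono convex_gradD) auto
  finally show "(\<Sum>j\<in>J. c j * F j x) + (\<Sum>j\<in>J. c j *\<^sub>R G j x) \<bullet> (y - x) \<le> (\<Sum>j\<in>J. c j * F j y)" .
qed

lemma smooth_grad_sum:
  fixes F :: "'j \<Rightarrow> 'a::real_inner \<Rightarrow> real"
  assumes "\<And>j. j \<in> J \<Longrightarrow> smooth_grad \<beta> (F j) (G j)" and "\<And>j. j \<in> J \<Longrightarrow> 0 \<le> c j"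
    and "sum c J \<le> 1" and "0 \<le> \<beta>"
  shows "smooth_grad \<beta> (\<lambda>x. \<Sum>j\<in>J. c j * F j x) (\<lambda>x. \<Sum>j\<in>J. c j *\<^sub>R G j x)"
  unfolding smooth_grad_def
proof (intro allI)
  fix x y :: 'a
  have "(\<Sum>j\<in>J. c j * F j y) \<le> (\<Sum>j\<in>J. c j * (F j x + G j x \<bullet> (y - x) + \<beta> / 2 * (norm (y - x))\<^sup>2))"
    using assms by (intro sum_mono mult_left_mono smooth_gradD) auto
  also have "\<dots> = (\<Sum>j\<in>J. c j * F j x) + (\<Sum>j\<in>J. c j *\<^sub>R G j x) \<bullet> (y - x)
      + sum c J * (\<beta> / 2 * (norm (y - x))\<^sup>2)"
    by (simp add: inner_sum_left sum.distrib distrib_left sum_distrib_right)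
  also have "\<dots> \<le> (\<Sum>j\<in>J. c j * F j x) + (\<Sum>j\<in>J. c j *\<^sub>R G j x) \<bullet> (y - x) + \<beta> / 2 * (norm (y - x))\<^sup>2"
    using mult_right_mono[OF assms(3), of "\<beta> / 2 * (norm (y - x))\<^sup>2"] assms(4) by simp
  finally show "(\<Sum>j\<in>J. c j * F j y)
      \<le> (\<Sum>j\<in>J. c j * F j x) + (\<Sum>j\<in>J. c j *\<^sub>R G j x) \<bullet> (y - x) + \<beta> / 2 * (norm (y - x))\<^sup>2" .
qed

section \<open>Gradient descent on a smooth convex objective\<close>

locale gd_smooth_convex =
  fixes R :: "'a::real_inner \<Rightarrow> real" and G :: "'a \<Rightarrow> 'a" and \<beta> :: real
    and x :: "nat \<Rightarrow> 'a" and w :: 'a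
  assumes convex: "convex_grad R G" and smooth: "smooth_grad \<beta> R G" and beta: "\<beta> > 0"
    and step: "\<And>k. x (Suc k) = x k - (1 / (2 * \<beta>)) *\<^sub>R G (x k)"
    and minimal: "\<And>v. R w \<le> R v"
begin

lemma descent_step: "R (x (Suc k)) \<le> R (x k) - 3 / (8 * \<beta>) * (norm (G (x k)))\<^sup>2"
proof -
  have "R (x (Suc k)) \<le> R (x k) + G (x k) \<bullet> (x (Suc k) - x k) + \<beta> / 2 * (norm (x (Suc k) - x k))\<^sup>2"
    by (rule smooth_gradD[OF smooth])
  also have "\<dots> = R (x k) - 3 / (8 * \<beta>) * (norm (G (x k)))\<^sup>2"
    using beta unfolding step power2_norm_eq_inner by (simp add: power2_eq_square field_simps)
  finally show ?thesis .
qed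

lemma objective_decreasing: "k \<le> m \<Longrightarrow> R (x m) \<le> R (x k)"
proof (induction m rule: dec_induct)
  case (step m)
  have "R (x (Suc m)) \<le> R (x m)"
    using descent_step[of m] beta by (smt (verit) divide_nonneg_nonneg zero_le_power2 mult_nonneg_nonneg)
  with step.IH show ?case by simp
qed simp

lemma excess_le_dist_decrease:
  "R (x (Suc k)) - R w \<le> \<beta> * ((norm (x k - w))\<^sup>2 - (norm (x (Suc k) - w))\<^sup>2)"
proof -
  define v where "v = x k - w"
  have next_dist: "x (Suc k) - w = v - (1 / (2 * \<beta>)) *\<^sub>R G (x k)"
    unfolding step v_def by simp
  have "R (x k) - R w \<le> G (x k) \<bullet> v"
    using convex_gradD[OF convex, of "x k" w] unfolding v_def by (simp add: inner_diff_right)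
  moreover have "\<beta> * ((norm v)\<^sup>2 - (norm (v - (1 / (2 * \<beta>)) *\<^sub>R G (x k)))\<^sup>2)
      = G (x k) \<bullet> v - 1 / (4 * \<beta>) * (norm (G (x k)))\<^sup>2"
    using beta unfolding power2_norm_eq_inner
    by (simp add: inner_diff_left inner_diff_right inner_commute field_simps power2_eq_square)
  moreover have "1 / (4 * \<beta>) * (norm (G (x k)))\<^sup>2 \<le> 3 / (8 * \<beta>) * (norm (G (x k)))\<^sup>2"
    using beta by (intro mult_right_mono) (auto simp: field_simps)
  ultimately show ?thesis
    using descent_step[of k] unfolding next_dist v_def[symmetric] by linarith
qed

lemma sum_excess_le: "(\<Sum>k<T. R (x (Suc k)) - R w) \<le> \<beta> * (norm (x 0 - w))\<^sup>2"
proof -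
  have "(\<Sum>k<T. R (x (Suc k)) - R w) \<le> (\<Sum>k<T. \<beta> * ((norm (x k - w))\<^sup>2 - (norm (x (Suc k) - w))\<^sup>2))"
    by (intro sum_mono excess_le_dist_decrease)
  also have "\<dots> = \<beta> * ((norm (x 0 - w))\<^sup>2 - (norm (x T - w))\<^sup>2)"
    using sum_lessThan_telescope'[of "\<lambda>k. (norm (x k - w))\<^sup>2" T] by (simp add: sum_distrib_left[symmetric])
  also have "\<dots> \<le> \<beta> * (norm (x 0 - w))\<^sup>2"
    using beta by simp
  finally show ?thesis .
qed

lemma last_iterate_excess_le: "real T * (R (x T) - R w) \<le> \<beta> * (norm (x 0 - w))\<^sup>2"
proof -
  have "real T * (R (x T) - R w) = (\<Sum>k<T. R (x T) - R w)" by simp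
  also have "\<dots> \<le> (\<Sum>k<T. R (x (Suc k)) - R w)"
    by (intro sum_mono) (simp add: objective_decreasing)
  also have "\<dots> \<le> \<beta> * (norm (x 0 - w))\<^sup>2" by (rule sum_excess_le)
  finally show ?thesis .
qed

lemma initial_excess_le: "R (x 0) - R w \<le> \<beta> / 2 * (norm (x 0 - w))\<^sup>2"
proof -
  have "(norm (G w))\<^sup>2 \<le> 2 * \<beta> * (R w - R w)"
    by (rule smooth_grad_norm_sq_le[OF smooth beta minimal])
  then have "G w = 0" by simp
  then show ?thesis
    using smooth_gradD[OF smooth, of "x 0" w] by simp
qed

lemma sum_iterates_le: "(\<Sum>k<T. R (x k)) \<le> real T * R w + 3 / 2 * \<beta> * (norm (x 0 - w))\<^sup>2"
proof (cases T)
  case 0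
  then show ?thesis using beta by simp
next
  case (Suc m)
  have "(\<Sum>k<T. R (x k) - R w) = (R (x 0) - R w) + (\<Sum>k<m. R (x (Suc k)) - R w)"
    unfolding Suc by (rule sum.lessThan_Suc_shift)
  also have "\<dots> \<le> \<beta> / 2 * (norm (x 0 - w))\<^sup>2 + \<beta> * (norm (x 0 - w))\<^sup>2"
    by (intro add_mono initial_excess_le sum_excess_le)
  finally show ?thesis by (simp add: sum_subtractf)
qed

end

section \<open>Stability of gradient descent under replacing one sample\<close>

lemma sum_mult_le_of_sq_bounds:
  fixes a b F F' :: "nat \<Rightarrow> real"
  assumes a: "\<And>k. (a k)\<^sup>2 \<le> 2 * \<beta> * F k" and b: "\<And>k. (b k)\<^sup>2 \<le> 2 * \<beta> * F' k"
  shows "a T * (\<Sum>k<T. a k + b k) \<le> \<beta> * (2 * real T * F T + (\<Sum>k<T. F k + F' k))"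
proof -
  have "a T * (a k + b k) \<le> 2 * \<beta> * F T + \<beta> * (F k + F' k)" for k
  proof -
    have "a T * (a k + b k) \<le> (a T)\<^sup>2 + (a k + b k)\<^sup>2 / 4"
      using sum_squares_ge_zero[of "a T - (a k + b k) / 2" 0] by (simp add: power2_eq_square algebra_simps)
    also have "\<dots> \<le> (a T)\<^sup>2 + ((a k)\<^sup>2 + (b k)\<^sup>2) / 2"
      using sum_squares_ge_zero[of "a k - b k" 0] by (simp add: power2_eq_square algebra_simps)
    also have "\<dots> \<le> 2 * \<beta> * F T + (2 * \<beta> * F k + 2 * \<beta> * F' k) / 2"
      using a[of T] a[of k] b[of k] by (intro add_mono divide_right_mono) auto
    also have "\<dots> = 2 * \<beta> * F T + \<beta> * (F k + F' k)"
      by (simp add: algebra_simps)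
    finally show ?thesis .
  qed
  then have "a T * (\<Sum>k<T. a k + b k) \<le> (\<Sum>k<T. 2 * \<beta> * F T + \<beta> * (F k + F' k))"
    unfolding sum_distrib_left by (rule sum_mono)
  then show ?thesis by (simp add: sum.distrib sum_distrib_left algebra_simps)
qed

lemma sum_sq_le_of_sq_bounds:
  fixes a b F F' :: "nat \<Rightarrow> real"
  assumes a: "\<And>k. (a k)\<^sup>2 \<le> 2 * \<beta> * F k" and b: "\<And>k. (b k)\<^sup>2 \<le> 2 * \<beta> * F' k"
  shows "(\<Sum>k<T. a k + b k)\<^sup>2 \<le> 4 * \<beta> * real T * (\<Sum>k<T. F k + F' k)"
proof -
  have "(\<Sum>k<T. a k + b k)\<^sup>2 \<le> (\<Sum>k<T. (a k + b k)\<^sup>2) * real T"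
    using sum_squared_le_sum_of_squares[of "\<lambda>k. a k + b k" "{..<T}"] by simp
  also have "\<dots> \<le> (\<Sum>k<T. 4 * \<beta> * (F k + F' k)) * real T"
  proof (intro mult_right_mono sum_mono)
    fix k
    have "(a k + b k)\<^sup>2 \<le> 2 * ((a k)\<^sup>2 + (b k)\<^sup>2)"
      using sum_squares_ge_zero[of "a k - b k" 0] by (simp add: power2_eq_square algebra_simps)
    then show "(a k + b k)\<^sup>2 \<le> 4 * \<beta> * (F k + F' k)"
      using a[of k] b[of k] by (simp add: algebra_simps)
  qed simp
  also have "\<dots> = 4 * \<beta> * real T * (\<Sum>k<T. F k + F' k)"
    by (simp only: sum_distrib_left[symmetric]) (simp add: algebra_simps)
  finally show ?thesis .
qed

lemma self_bounded_drift_le: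
  fixes a b F F' :: "nat \<Rightarrow> real"
  assumes beta: "\<beta> > 0" and n: "n > 0"
    and a: "\<And>k. (a k)\<^sup>2 \<le> 2 * \<beta> * F k" and b: "\<And>k. (b k)\<^sup>2 \<le> 2 * \<beta> * F' k"
    and "0 \<le> a T" and "0 \<le> \<delta>" and \<delta>: "\<delta> \<le> (\<Sum>k<T. a k + b k) / (2 * \<beta> * real n)"
  shows "a T * \<delta> + \<beta> / 2 * \<delta>\<^sup>2
    \<le> real T / real n * F T + (1 / (2 * real n) + real T / (2 * (real n)\<^sup>2)) * (\<Sum>k<T. F k + F' k)"
proof -
  define \<Sigma> where "\<Sigma> = (\<Sum>k<T. F k + F' k)"
  have "a T * \<delta> \<le> a T * (\<Sum>k<T. a k + b k) / (2 * \<beta> * real n)"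
    using mult_left_mono[OF \<delta> \<open>0 \<le> a T\<close>] by simp
  also have "\<dots> \<le> \<beta> * (2 * real T * F T + \<Sigma>) / (2 * \<beta> * real n)"
    unfolding \<Sigma>_def using beta n
    by (intro divide_right_mono sum_mult_le_of_sq_bounds a b) auto
  finally have linear: "a T * \<delta> \<le> \<beta> * (2 * real T * F T + \<Sigma>) / (2 * \<beta> * real n)" .
  have "\<delta>\<^sup>2 \<le> ((\<Sum>k<T. a k + b k) / (2 * \<beta> * real n))\<^sup>2"
    using \<delta> \<open>0 \<le> \<delta>\<close> by (intro power_mono) auto
  also have "\<dots> \<le> 4 * \<beta> * real T * \<Sigma> / (2 * \<beta> * real n)\<^sup>2"
    unfolding power_divide \<Sigma>_def
    by (intro divide_right_mono sum_sq_le_of_sq_bounds a b) auto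
  finally have "\<beta> / 2 * \<delta>\<^sup>2 \<le> \<beta> / 2 * (4 * \<beta> * real T * \<Sigma> / (2 * \<beta> * real n)\<^sup>2)"
    using beta by (intro mult_left_mono) auto
  with linear have "a T * \<delta> + \<beta> / 2 * \<delta>\<^sup>2
      \<le> \<beta> * (2 * real T * F T + \<Sigma>) / (2 * \<beta> * real n)
        + \<beta> / 2 * (4 * \<beta> * real T * \<Sigma> / (2 * \<beta> * real n)\<^sup>2)"
    by linarith
  also have "\<dots> = real T / real n * F T + (1 / (2 * real n) + real T / (2 * (real n)\<^sup>2)) * \<Sigma>"
    using beta n by (simp add: field_simps power2_eq_square)
  finally show ?thesis unfolding \<Sigma>_def .
qed

locale smooth_convex_loss =
  fixes f :: "'a::real_inner \<Rightarrow> 'z \<Rightarrow> real" and g :: "'a \<Rightarrow> 'z \<Rightarrow> 'a"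
    and \<beta> :: real and Z :: "'z set" and n :: nat and W1 :: 'a
  assumes n: "n > 0" and beta: "\<beta> > 0"
    and nonneg: "\<And>w z. z \<in> Z \<Longrightarrow> f w z \<ge> 0"
    and grad: "\<And>w z. z \<in> Z \<Longrightarrow> ((\<lambda>v. f v z) has_derivative (\<lambda>h. g w z \<bullet> h)) (at w)"
    and convex: "\<And>z. z \<in> Z \<Longrightarrow> convex_on UNIV (\<lambda>w. f w z)"
    and smooth: "\<And>w u z. z \<in> Z \<Longrightarrow> norm (g w z - g u z) \<le> \<beta> * norm (w - u)"
begin

abbreviation gd_iter :: "(nat \<Rightarrow> 'z) \<Rightarrow> nat \<Rightarrow> 'a" where
  "gd_iter S k \<equiv> gd g (\<lambda>_. 1 / (2 * \<beta>)) n W1 S k"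

definition emp_grad :: "(nat \<Rightarrow> 'z) \<Rightarrow> 'a \<Rightarrow> 'a" where
  "emp_grad S w = (\<Sum>j<n. (1 / real n) *\<^sub>R g w (S j))"

lemma loss_convex_grad: "z \<in> Z \<Longrightarrow> convex_grad (\<lambda>w. f w z) (\<lambda>w. g w z)"
  by (intro convex_on_imp_convex_grad grad convex)

lemma loss_smooth_grad: "z \<in> Z \<Longrightarrow> smooth_grad \<beta> (\<lambda>w. f w z) (\<lambda>w. g w z)"
  by (intro lipschitz_gradient_imp_smooth_grad grad smooth)

lemma grad_norm_sq_le_loss: "z \<in> Z \<Longrightarrow> (norm (g w z))\<^sup>2 \<le> 2 * \<beta> * f w z"
  using smooth_grad_norm_sq_le[OF loss_smooth_grad beta, of z 0 w] nonneg by simp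

lemma emp_risk_eq_sum: "emp_risk n f S = (\<lambda>w. \<Sum>j<n. (1 / real n) * f w (S j))"
  unfolding emp_risk_def by (simp add: fun_eq_iff sum_divide_distrib)

lemma gd_iter_Suc: "gd_iter S (Suc k) = gd_iter S k - (1 / (2 * \<beta>)) *\<^sub>R emp_grad S (gd_iter S k)"
  by (simp add: emp_grad_def scaleR_sum_right)

lemma gd_smooth_convex_emp_risk:
  assumes S: "\<And>j. j < n \<Longrightarrow> S j \<in> Z" and minimal: "\<And>v. emp_risk n f S w \<le> emp_risk n f S v"
  shows "gd_smooth_convex (emp_risk n f S) (emp_grad S) \<beta> (gd_iter S) w"
proof
  show "convex_grad (emp_risk n f S) (emp_grad S)"
    unfolding emp_risk_eq_sum emp_grad_def
    by (rule convex_grad_sum[where F = "\<lambda>j w. f w (S j)" and G = "\<lambda>j w. g w (S j)"])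
      (auto intro: loss_convex_grad S)
  show "smooth_grad \<beta> (emp_risk n f S) (emp_grad S)"
    unfolding emp_risk_eq_sum emp_grad_def
    by (rule smooth_grad_sum[where F = "\<lambda>j w. f w (S j)" and G = "\<lambda>j w. g w (S j)"])
      (use n beta in \<open>auto intro: loss_smooth_grad S\<close>)
qed (use beta gd_iter_Suc minimal in auto)

definition emp_grad_without :: "nat \<Rightarrow> (nat \<Rightarrow> 'z) \<Rightarrow> 'a \<Rightarrow> 'a" where
  "emp_grad_without i S w = (\<Sum>j\<in>{..<n} - {i}. (1 / real n) *\<^sub>R g w (S j))"

lemma gd_iter_Suc_split:
  assumes "i < n"
  shows "gd_iter S (Suc k) = (gd_iter S k - (1 / (2 * \<beta>)) *\<^sub>R emp_grad_without i S (gd_iter S k))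
    - (1 / (2 * \<beta> * real n)) *\<^sub>R g (gd_iter S k) (S i)"
proof -
  have "emp_grad S w = (1 / real n) *\<^sub>R g w (S i) + emp_grad_without i S w" for w
    unfolding emp_grad_def emp_grad_without_def using assms by (simp add: sum.remove[of "{..<n}" i])
  then show ?thesis
    unfolding gd_iter_Suc by (simp add: algebra_simps)
qed

lemma emp_grad_without_cong:
  "(\<And>j. j < n \<Longrightarrow> j \<noteq> i \<Longrightarrow> S' j = S j) \<Longrightarrow> emp_grad_without i S' = emp_grad_without i S"
  unfolding emp_grad_without_def by (intro ext sum.cong) auto

lemma emp_grad_without_step_nonexpansive:
  assumes S: "\<And>j. j < n \<Longrightarrow> S j \<in> Z"
  shows "norm ((u - (1 / (2 * \<beta>)) *\<^sub>R emp_grad_without i S u) - (v - (1 / (2 * \<beta>)) *\<^sub>R emp_grad_without i S v))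
    \<le> norm (u - v)"
proof -
  define J where "J = {..<n} - {i}"
  define H where "H w = (\<Sum>j\<in>J. (1 / real n) * f w (S j))" for w
  have "card J \<le> n" unfolding J_def by (metis card_Diff1_le card_lessThan finite_lessThan)
  then have weights: "(\<Sum>j\<in>J. 1 / real n) \<le> 1" using n by (simp add: field_simps)
  have "convex_grad H (emp_grad_without i S)"
    unfolding H_def emp_grad_without_def J_def[symmetric]
    by (rule convex_grad_sum[where F = "\<lambda>j w. f w (S j)" and G = "\<lambda>j w. g w (S j)"])
      (auto simp: J_def intro: loss_convex_grad S)
  moreover have "smooth_grad \<beta> H (emp_grad_without i S)"
    unfolding H_def emp_grad_without_def J_def[symmetric]
    by (rule smooth_grad_sum[where F = "\<lambda>j w. f w (S j)" and G = "\<lambda>j w. g w (S j)"])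
      (use weights beta in \<open>auto simp: J_def intro: loss_smooth_grad S\<close>)
  ultimately show ?thesis
    by (rule gradient_step_nonexpansive) (use beta in \<open>auto simp: field_simps\<close>)
qed

lemma gd_iter_replace_one_dist:
  assumes S: "\<And>j. j < n \<Longrightarrow> S j \<in> Z"
    and i: "i < n" and same: "\<And>j. j < n \<Longrightarrow> j \<noteq> i \<Longrightarrow> S' j = S j"
  shows "norm (gd_iter S k - gd_iter S' k)
    \<le> (\<Sum>t<k. norm (g (gd_iter S t) (S i)) + norm (g (gd_iter S' t) (S' i))) / (2 * \<beta> * real n)"
proof (induction k)
  case (Suc k)
  define G where "G = emp_grad_without i S"
  define u where "u = gd_iter S k - (1 / (2 * \<beta>)) *\<^sub>R G (gd_iter S k)"
  define u' where "u' = gd_iter S' k - (1 / (2 * \<beta>)) *\<^sub>R G (gd_iter S' k)"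
  define d where "d = (1 / (2 * \<beta> * real n)) *\<^sub>R g (gd_iter S k) (S i)"
  define d' where "d' = (1 / (2 * \<beta> * real n)) *\<^sub>R g (gd_iter S' k) (S' i)"
  have step: "gd_iter S (Suc k) = u - d" "gd_iter S' (Suc k) = u' - d'"
    using gd_iter_Suc_split[OF i, of S k] gd_iter_Suc_split[OF i, of S' k] emp_grad_without_cong[OF same]
    unfolding u_def u'_def d_def d'_def G_def by simp_all
  have "norm (gd_iter S (Suc k) - gd_iter S' (Suc k)) = norm ((u - u') - (d - d'))"
    unfolding step by (simp add: algebra_simps)
  also have "\<dots> \<le> norm (u - u') + (norm d + norm d')"
    by (rule order_trans[OF norm_triangle_ineq4 add_left_mono[OF norm_triangle_ineq4]])
  also have "\<dots> \<le> norm (gd_iter S k - gd_iter S' k)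
      + (norm (g (gd_iter S k) (S i)) + norm (g (gd_iter S' k) (S' i))) / (2 * \<beta> * real n)"
    using emp_grad_without_step_nonexpansive[OF S] beta n
    unfolding u_def u'_def d_def d'_def G_def by (simp add: add_divide_distrib)
  also have "\<dots> \<le> (\<Sum>t<Suc k. norm (g (gd_iter S t) (S i)) + norm (g (gd_iter S' t) (S' i)))
      / (2 * \<beta> * real n)"
    using Suc.IH by (simp add: add_divide_distrib)
  finally show ?case .
qed simp

lemma loss_replace_one_le:
  assumes S: "\<And>j. j < n \<Longrightarrow> S j \<in> Z" and S': "\<And>j. j < n \<Longrightarrow> S' j \<in> Z"
    and i: "i < n" and same: "\<And>j. j < n \<Longrightarrow> j \<noteq> i \<Longrightarrow> S' j = S j"
  shows "\<bar>f (gd_iter S' T) (S i) - f (gd_iter S T) (S i)\<bar>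
    \<le> real T / real n * f (gd_iter S T) (S i)
      + (1 / (2 * real n) + real T / (2 * (real n)\<^sup>2))
        * (\<Sum>k<T. f (gd_iter S k) (S i) + f (gd_iter S' k) (S' i))"
proof -
  define a where "a k = norm (g (gd_iter S k) (S i))" for k
  define b where "b k = norm (g (gd_iter S' k) (S' i))" for k
  define \<delta> where "\<delta> = norm (gd_iter S' T - gd_iter S T)"
  have Si: "S i \<in> Z" and S'i: "S' i \<in> Z" using S S' i by auto
  have "\<bar>f (gd_iter S' T) (S i) - f (gd_iter S T) (S i)\<bar> \<le> a T * \<delta> + \<beta> / 2 * \<delta>\<^sup>2"
    unfolding a_def \<delta>_def using beta
    by (intro convex_smooth_grad_abs_diff_le loss_convex_grad loss_smooth_grad Si) auto
  also have "\<dots> \<le> real T / real n * f (gd_iter S T) (S i)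
      + (1 / (2 * real n) + real T / (2 * (real n)\<^sup>2))
        * (\<Sum>k<T. f (gd_iter S k) (S i) + f (gd_iter S' k) (S' i))"
  proof (rule self_bounded_drift_le[OF beta n])
    show "(a k)\<^sup>2 \<le> 2 * \<beta> * f (gd_iter S k) (S i)" "(b k)\<^sup>2 \<le> 2 * \<beta> * f (gd_iter S' k) (S' i)" for k
      unfolding a_def b_def using Si S'i by (auto intro: grad_norm_sq_le_loss)
    show "\<delta> \<le> (\<Sum>k<T. a k + b k) / (2 * \<beta> * real n)"
      using gd_iter_replace_one_dist[OF S i same, where k = T] unfolding \<delta>_def a_def b_def
      by (simp add: norm_minus_commute)
  qed (auto simp: a_def \<delta>_def)
  finally show ?thesis .
qed

end

section \<open>Measurability of Caratheodory functions\<close>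

(* Rounding down to the grid of mesh 1/(k+1): a countably-valued approximation of the identity. *)
definition grid_round :: "nat \<Rightarrow> 'a::euclidean_space \<Rightarrow> 'a" where
  "grid_round k w = (\<Sum>b\<in>Basis. (of_int \<lfloor>real (Suc k) * (w \<bullet> b)\<rfloor> / real (Suc k)) *\<^sub>R b)"

lemma floor_scaled_tendsto: "(\<lambda>k. of_int \<lfloor>real (Suc k) * x\<rfloor> / real (Suc k)) \<longlonglongrightarrow> (x::real)"
proof (rule tendsto_sandwich[where f = "\<lambda>k. x - 1 / real (Suc k)" and h = "\<lambda>k. x"])
  show "\<forall>\<^sub>F k in sequentially. x - 1 / real (Suc k) \<le> of_int \<lfloor>real (Suc k) * x\<rfloor> / real (Suc k)"
  proof (intro always_eventually allI)
    fix k
    have "x - 1 / real (Suc k) = (real (Suc k) * x - 1) / real (Suc k)" by (simp add: field_simps)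
    also have "\<dots> \<le> of_int \<lfloor>real (Suc k) * x\<rfloor> / real (Suc k)"
      by (rule divide_right_mono) (linarith, simp)
    finally show "x - 1 / real (Suc k) \<le> of_int \<lfloor>real (Suc k) * x\<rfloor> / real (Suc k)" .
  qed
  show "\<forall>\<^sub>F k in sequentially. of_int \<lfloor>real (Suc k) * x\<rfloor> / real (Suc k) \<le> x"
  proof (intro always_eventually allI)
    fix k
    have "of_int \<lfloor>real (Suc k) * x\<rfloor> / real (Suc k) \<le> (real (Suc k) * x) / real (Suc k)"
      by (rule divide_right_mono) (linarith, simp)
    then show "of_int \<lfloor>real (Suc k) * x\<rfloor> / real (Suc k) \<le> x" by simp
  qed
  have "(\<lambda>k. 1 / real (Suc k)) \<longlonglongrightarrow> 0"
    by (rule LIMSEQ_inverse_real_of_nat[unfolded inverse_eq_divide])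
  then show "(\<lambda>k. x - 1 / real (Suc k)) \<longlonglongrightarrow> x"
    using tendsto_diff[of "\<lambda>_. x" x sequentially] by force
qed simp

lemma grid_round_tendsto: "(\<lambda>k. grid_round k w) \<longlonglongrightarrow> w"
proof -
  have "(\<lambda>k. grid_round k w) \<longlonglongrightarrow> (\<Sum>b\<in>Basis. (w \<bullet> b) *\<^sub>R b)"
    unfolding grid_round_def by (intro tendsto_intros floor_scaled_tendsto)
  then show ?thesis by (simp add: euclidean_representation)
qed

lemma grid_coordinates_measurable:
  fixes w :: "'m \<Rightarrow> 'a::euclidean_space"
  assumes [measurable]: "w \<in> borel_measurable M"
  shows "(\<lambda>x. restrict (\<lambda>b. \<lfloor>real (Suc k) * (w x \<bullet> b)\<rfloor>) Basis)
    \<in> measurable M (count_space (Pi\<^sub>E Basis (\<lambda>_. UNIV)))"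
proof (subst measurable_count_space_eq_countable)
  show "countable (Pi\<^sub>E (Basis::'a set) (\<lambda>_. UNIV :: int set))"
    by (intro countable_PiE) auto
  show "(\<lambda>x. restrict (\<lambda>b. \<lfloor>real (Suc k) * (w x \<bullet> b)\<rfloor>) Basis) \<in> space M \<rightarrow> Pi\<^sub>E Basis (\<lambda>_. UNIV) \<and>
    (\<forall>a\<in>Pi\<^sub>E Basis (\<lambda>_. UNIV). (\<lambda>x. restrict (\<lambda>b. \<lfloor>real (Suc k) * (w x \<bullet> b)\<rfloor>) Basis) -` {a} \<inter> space M \<in> sets M)"
  proof safe
    fix a :: "'a \<Rightarrow> int" assume a: "a \<in> Pi\<^sub>E Basis (\<lambda>_. UNIV)"
    have "(\<lambda>x. restrict (\<lambda>b. \<lfloor>real (Suc k) * (w x \<bullet> b)\<rfloor>) Basis) -` {a} \<inter> space M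
        = {x \<in> space M. \<forall>b\<in>Basis. \<lfloor>real (Suc k) * (w x \<bullet> b)\<rfloor> = a b}"
      using a by (auto simp: fun_eq_iff restrict_def PiE_def extensional_def)
    also have "\<dots> \<in> sets M" by measurable
    finally show "(\<lambda>x. restrict (\<lambda>b. \<lfloor>real (Suc k) * (w x \<bullet> b)\<rfloor>) Basis) -` {a} \<inter> space M \<in> sets M" .
  qed auto
qed

lemma borel_measurable_caratheodory:
  fixes H :: "'a::euclidean_space \<Rightarrow> 'm \<Rightarrow> 'b::metric_space"
  assumes measurable: "\<And>v. H v \<in> borel_measurable M"
    and continuous: "\<And>x. x \<in> space M \<Longrightarrow> continuous_on UNIV (\<lambda>v. H v x)"
    and w: "w \<in> borel_measurable M"
  shows "(\<lambda>x. H (w x) x) \<in> borel_measurable M"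
proof (rule borel_measurable_LIMSEQ_metric[where f = "\<lambda>k x. H (grid_round k (w x)) x"])
  fix k
  define P where "P a = (\<Sum>b\<in>Basis. (of_int (a b) / real (Suc k)) *\<^sub>R b)" for a :: "'a \<Rightarrow> int"
  have "grid_round k (w x) = P (restrict (\<lambda>b. \<lfloor>real (Suc k) * (w x \<bullet> b)\<rfloor>) Basis)" for x
    unfolding grid_round_def P_def by (intro sum.cong) auto
  moreover have "(\<lambda>x. H (P (restrict (\<lambda>b. \<lfloor>real (Suc k) * (w x \<bullet> b)\<rfloor>) Basis)) x) \<in> borel_measurable M"
    by (rule measurable_compose_countable'[OF measurable grid_coordinates_measurable[OF w]])
      (intro countable_PiE, auto)
  ultimately show "(\<lambda>x. H (grid_round k (w x)) x) \<in> borel_measurable M" by simp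
next
  fix x assume "x \<in> space M"
  then have "isCont (\<lambda>v. H v x) (w x)"
    using continuous by (simp add: continuous_on_eq_continuous_at)
  then show "(\<lambda>k. H (grid_round k (w x)) x) \<longlonglongrightarrow> H (w x) x"
    using grid_round_tendsto isCont_tendsto_compose by blast
qed

section \<open>Independent samples and a ghost sample\<close>

locale iid_smooth_convex_loss = smooth_convex_loss f g \<beta> "space D" n W1
  for f :: "'a::euclidean_space \<Rightarrow> 'z \<Rightarrow> real" and g \<beta> n and D :: "'z measure" and W1 +
  assumes D: "prob_space D" and integrable_loss: "\<And>w. integrable D (f w)"
begin

abbreviation Dn :: "(nat \<Rightarrow> 'z) measure" where
  "Dn \<equiv> PiM {..<n} (\<lambda>_. D)"

lemma loss_measurable[measurable]: "f w \<in> borel_measurable D"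
  using integrable_loss by auto

lemma loss_continuous: "z \<in> space D \<Longrightarrow> continuous_on UNIV (\<lambda>w. f w z)"
  using grad by (meson continuous_at_imp_continuous_on has_derivative_continuous)

lemma grad_continuous: "z \<in> space D \<Longrightarrow> continuous_on UNIV (\<lambda>w. g w z)"
proof -
  assume "z \<in> space D"
  then have "\<beta>-lipschitz_on UNIV (\<lambda>w. g w z)"
    using smooth beta by (intro lipschitz_onI) (auto simp: dist_norm)
  then show ?thesis by (rule lipschitz_on_continuous_on)
qed

lemma grad_measurable[measurable]: "g w \<in> borel_measurable D"
proof (subst borel_measurable_euclidean_space, intro ballI)
  fix b :: 'a assume b: "b \<in> Basis"
  define h where "h k = 1 / real (Suc k)" for k
  show "(\<lambda>z. g w z \<bullet> b) \<in> borel_measurable D"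
  proof (rule borel_measurable_LIMSEQ_real[where u = "\<lambda>k z. (f (w + h k *\<^sub>R b) z - f w z) / h k"])
    fix z assume z: "z \<in> space D"
    have "((\<lambda>t. f (w + t *\<^sub>R b) z) has_real_derivative (g w z \<bullet> b)) (at 0)"
      using has_real_derivative_along_line[of "\<lambda>w. f w z" "g w z" w 0 b] grad[OF z] by simp
    then have "((\<lambda>t. (f (w + t *\<^sub>R b) z - f w z) / t) \<longlongrightarrow> g w z \<bullet> b) (at 0)"
      unfolding has_field_derivative_iff by simp
    moreover have "h \<longlonglongrightarrow> 0"
      unfolding h_def by (rule LIMSEQ_inverse_real_of_nat[unfolded inverse_eq_divide])
    moreover have "h k \<noteq> 0" for k
      unfolding h_def by simp
    ultimately show "(\<lambda>k. (f (w + h k *\<^sub>R b) z - f w z) / h k) \<longlonglongrightarrow> g w z \<bullet> b"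
      using LIMSEQ_SEQ_conv[where X = "\<lambda>t. (f (w + t *\<^sub>R b) z - f w z) / t"] by blast
  qed measurable
qed

lemma gd_iter_measurable[measurable]: "(\<lambda>S. gd_iter S k) \<in> borel_measurable Dn"
proof (induction k)
  case (Suc k)
  have "(\<lambda>S. g (gd_iter S k) (S j)) \<in> borel_measurable Dn" if j: "j < n" for j
  proof (rule borel_measurable_caratheodory[where H = "\<lambda>v S. g v (S j)", OF _ _ Suc.IH])
    fix v
    have "(\<lambda>S. S j) \<in> measurable Dn D"
      using j by (intro measurable_component_singleton) auto
    then show "(\<lambda>S. g v (S j)) \<in> borel_measurable Dn" by measurable
  next
    fix S assume "S \<in> space Dn"
    then show "continuous_on UNIV (\<lambda>v. g v (S j))"
      using j by (intro grad_continuous) (auto simp: space_PiM)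
  qed
  then show ?case using Suc.IH by simp
qed simp

lemma loss_gd_iter_measurable:
  assumes "Sx \<in> measurable M Dn" and "zx \<in> measurable M D"
  shows "(\<lambda>x. f (gd_iter (Sx x) k) (zx x)) \<in> borel_measurable M"
proof (rule borel_measurable_caratheodory[where H = "\<lambda>v x. f v (zx x)"])
  show "(\<lambda>x. gd_iter (Sx x) k) \<in> borel_measurable M"
    using measurable_compose[OF assms(1) gd_iter_measurable] .
  show "(\<lambda>x. f v (zx x)) \<in> borel_measurable M" for v
    using assms(2) by measurable
  show "continuous_on UNIV (\<lambda>v. f v (zx x))" if "x \<in> space M" for x
    using that assms(2) by (intro loss_continuous) (auto simp: measurable_space)
qed

(* A point of Dn1 is a sample z_0, ..., z_(n-1) together with a ghost sample z_n;
   swap_ghost i exchanges z_i with the ghost sample. *)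
abbreviation Dn1 :: "(nat \<Rightarrow> 'z) measure" where
  "Dn1 \<equiv> PiM {..n} (\<lambda>_. D)"

definition swap_ghost :: "nat \<Rightarrow> (nat \<Rightarrow> 'z) \<Rightarrow> nat \<Rightarrow> 'z" where
  "swap_ghost i x = (\<lambda>k\<in>{..n}. x (Transposition.transpose i n k))"

lemma product_prob_space_D: "product_prob_space (\<lambda>_::nat. D)"
  unfolding product_prob_space_def product_prob_space_axioms_def product_sigma_finite_def
  using D prob_space_imp_sigma_finite by blast

lemma restrict_sample_measurable[measurable]: "(\<lambda>x. restrict x {..<n}) \<in> measurable Dn1 Dn"
  by (rule measurable_restrict_subset) auto

lemma swap_ghost_measurable[measurable]: "i \<le> n \<Longrightarrow> swap_ghost i \<in> measurable Dn1 Dn1"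
  unfolding swap_ghost_def
  by (intro measurable_restrict measurable_component_singleton) (auto simp: Transposition.transpose_def)

lemma distr_restrict_sample: "distr Dn1 Dn (\<lambda>x. restrict x {..<n}) = Dn"
proof -
  have "{..<n} \<subseteq> {..n}" by auto
  then show ?thesis
    using product_prob_space.distr_restrict[OF product_prob_space_D, of "{..<n}" "{..n}"] by simp
qed

lemma distr_swap_ghost:
  assumes "i \<le> n"
  shows "distr Dn1 Dn1 (swap_ghost i) = Dn1"
proof -
  have "Transposition.transpose i n \<in> {..n} \<rightarrow> {..n}"
    using assms by (auto simp: Transposition.transpose_def)
  then show ?thesis
    unfolding swap_ghost_def using distr_PiM_reindex[of "{..n}" "\<lambda>_. D" "Transposition.transpose i n" "{..n}"] D
    by simp
qed

lemma
  fixes F :: "(nat \<Rightarrow> 'z) \<Rightarrow> real"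
  assumes [measurable]: "F \<in> borel_measurable Dn"
  shows integral_restrict_sample: "(\<integral>x. F (restrict x {..<n}) \<partial>Dn1) = integral\<^sup>L Dn F"
    and integrable_restrict_sample_iff: "integrable Dn1 (\<lambda>x. F (restrict x {..<n})) \<longleftrightarrow> integrable Dn F"
  using integral_distr[OF restrict_sample_measurable assms] integrable_distr_eq[OF restrict_sample_measurable assms]
  by (simp_all add: distr_restrict_sample)

lemma
  fixes F :: "(nat \<Rightarrow> 'z) \<Rightarrow> real"
  assumes i: "i \<le> n" and [measurable]: "F \<in> borel_measurable Dn1"
  shows integral_swap_ghost: "(\<integral>x. F (swap_ghost i x) \<partial>Dn1) = integral\<^sup>L Dn1 F"
    and integrable_swap_ghost_iff: "integrable Dn1 (\<lambda>x. F (swap_ghost i x)) \<longleftrightarrow> integrable Dn1 F"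
  using integral_distr[OF swap_ghost_measurable[OF i] assms(2)]
    integrable_distr_eq[OF swap_ghost_measurable[OF i] assms(2)]
  by (simp_all add: distr_swap_ghost[OF i])

lemma
  fixes h :: "'z \<Rightarrow> real"
  assumes j: "j < n" and [measurable]: "h \<in> borel_measurable D"
  shows integral_sample_component: "(\<integral>S. h (S j) \<partial>Dn) = integral\<^sup>L D h"
    and integrable_sample_component_iff: "integrable Dn (\<lambda>S. h (S j)) \<longleftrightarrow> integrable D h"
proof -
  have component: "(\<lambda>S. S j) \<in> measurable Dn D"
    using j by (intro measurable_component_singleton) auto
  have "distr Dn D (\<lambda>S. S j) = D"
    using product_prob_space.PiM_component[OF product_prob_space_D, of j "{..<n}"] j by auto
  then show "(\<integral>S. h (S j) \<partial>Dn) = integral\<^sup>L D h"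
    and "integrable Dn (\<lambda>S. h (S j)) \<longleftrightarrow> integrable D h"
    using integral_distr[OF component assms(2)] integrable_distr_eq[OF component assms(2)] by auto
qed

lemma nn_integral_ghost:
  fixes F :: "(nat \<Rightarrow> 'z) \<Rightarrow> 'z \<Rightarrow> real"
  assumes [measurable]: "(\<lambda>x. F (restrict x {..<n}) (x n)) \<in> borel_measurable Dn1"
  shows "(\<integral>\<^sup>+x. F (restrict x {..<n}) (x n) \<partial>Dn1) = (\<integral>\<^sup>+S. (\<integral>\<^sup>+z. F S z \<partial>D) \<partial>Dn)"
proof -
  interpret product_prob_space "\<lambda>_::nat. D" by (rule product_prob_space_D)
  have insert_n: "{..n} = insert n {..<n}" by auto
  have "(\<lambda>x. ennreal (F (restrict x {..<n}) (x n))) \<in> borel_measurable (PiM (insert n {..<n}) (\<lambda>_. D))"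
    unfolding insert_n[symmetric] by measurable
  then have "(\<integral>\<^sup>+x. F (restrict x {..<n}) (x n) \<partial>Dn1)
      = (\<integral>\<^sup>+S. (\<integral>\<^sup>+z. F (restrict (S(n := z)) {..<n}) z \<partial>D) \<partial>Dn)"
    unfolding insert_n by (subst product_nn_integral_insert) auto
  also have "\<dots> = (\<integral>\<^sup>+S. (\<integral>\<^sup>+z. F S z \<partial>D) \<partial>Dn)"
  proof (rule nn_integral_cong)
    fix S assume "S \<in> space Dn"
    then have "restrict (S(n := z)) {..<n} = S" for z
      by (auto simp: space_PiM PiE_def extensional_def fun_eq_iff)
    then show "(\<integral>\<^sup>+z. F (restrict (S(n := z)) {..<n}) z \<partial>D) = (\<integral>\<^sup>+z. F S z \<partial>D)" by simp
  qed
  finally show ?thesis .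
qed

lemma sample_in_space: "S \<in> space Dn \<Longrightarrow> j < n \<Longrightarrow> S j \<in> space D"
  by (auto simp: space_PiM)

lemma ghost_sample_in_space: "x \<in> space Dn1 \<Longrightarrow> j \<le> n \<Longrightarrow> x j \<in> space D"
  by (auto simp: space_PiM)

end

section \<open>Generalization and excess risk of gradient descent\<close>

locale gd_generalization = iid_smooth_convex_loss f g \<beta> n D W1
  for f :: "'a::euclidean_space \<Rightarrow> 'z \<Rightarrow> real" and g \<beta> n and D :: "'z measure" and W1 +
  fixes WS :: "(nat \<Rightarrow> 'z) \<Rightarrow> 'a" and T :: nat
  assumes emp_risk_min: "\<And>S w. S \<in> space Dn \<Longrightarrow> emp_risk n f S (WS S) \<le> emp_risk n f S w"
    and integrable_pop_risk: "integrable Dn (\<lambda>S. pop_risk D f (gd_iter S T))"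
    and integrable_emp_risk_min: "integrable Dn (\<lambda>S. emp_risk n f S (WS S))"
    and integrable_init_dist: "integrable Dn (\<lambda>S. (norm (W1 - WS S))\<^sup>2)"
begin

(* The paper's epsilon_c and E ||W_1 - W*_S||^2. *)
abbreviation opt_emp_risk :: real where
  "opt_emp_risk \<equiv> \<integral>S. emp_risk n f S (WS S) \<partial>Dn"

abbreviation init_dist :: real where
  "init_dist \<equiv> \<integral>S. (norm (W1 - WS S))\<^sup>2 \<partial>Dn"

definition expected_sample_loss :: "nat \<Rightarrow> nat \<Rightarrow> real" where
  "expected_sample_loss k i = (\<integral>S. f (gd_iter S k) (S i) \<partial>Dn)"

definition expected_emp_risk :: "nat \<Rightarrow> real" where
  "expected_emp_risk k = (\<integral>S. emp_risk n f S (gd_iter S k) \<partial>Dn)"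

lemma emp_risk_nonneg: "S \<in> space Dn \<Longrightarrow> 0 \<le> emp_risk n f S w"
  unfolding emp_risk_def using nonneg sample_in_space by (auto intro!: divide_nonneg_nonneg sum_nonneg)

lemma gd_smooth_convex_sample:
  "S \<in> space Dn \<Longrightarrow> gd_smooth_convex (emp_risk n f S) (emp_grad S) \<beta> (gd_iter S) (WS S)"
  by (intro gd_smooth_convex_emp_risk sample_in_space emp_risk_min)

lemma emp_risk_gd_iter_le:
  assumes "S \<in> space Dn"
  shows "emp_risk n f S (gd_iter S k) \<le> emp_risk n f S (WS S) + \<beta> / 2 * (norm (W1 - WS S))\<^sup>2"
proof -
  interpret gd: gd_smooth_convex "emp_risk n f S" "emp_grad S" \<beta> "gd_iter S" "WS S"
    using assms by (rule gd_smooth_convex_sample)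
  show ?thesis using gd.objective_decreasing[of 0 k] gd.initial_excess_le by simp
qed

lemma loss_le_emp_risk: "S \<in> space Dn \<Longrightarrow> i < n \<Longrightarrow> f w (S i) \<le> real n * emp_risk n f S w"
  unfolding emp_risk_def using n nonneg sample_in_space
  by (auto intro!: member_le_sum)

lemma loss_gd_iter_sample_measurable[measurable]:
  "i < n \<Longrightarrow> (\<lambda>S. f (gd_iter S k) (S i)) \<in> borel_measurable Dn"
  by (rule loss_gd_iter_measurable) (auto intro: measurable_component_singleton)

lemma integrable_loss_gd_iter:
  assumes i: "i < n"
  shows "integrable Dn (\<lambda>S. f (gd_iter S k) (S i))"
proof (rule Bochner_Integration.integrable_bound)
  show "integrable Dn (\<lambda>S. real n * (emp_risk n f S (WS S) + \<beta> / 2 * (norm (W1 - WS S))\<^sup>2))"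
    using integrable_emp_risk_min integrable_init_dist by auto
  show "AE S in Dn. norm (f (gd_iter S k) (S i))
      \<le> norm (real n * (emp_risk n f S (WS S) + \<beta> / 2 * (norm (W1 - WS S))\<^sup>2))"
  proof (rule AE_I2)
    fix S assume S: "S \<in> space Dn"
    have "f (gd_iter S k) (S i) \<le> real n * emp_risk n f S (gd_iter S k)"
      using S i by (rule loss_le_emp_risk)
    also have "\<dots> \<le> real n * (emp_risk n f S (WS S) + \<beta> / 2 * (norm (W1 - WS S))\<^sup>2)"
      using S by (intro mult_left_mono emp_risk_gd_iter_le) auto
    finally show "norm (f (gd_iter S k) (S i))
        \<le> norm (real n * (emp_risk n f S (WS S) + \<beta> / 2 * (norm (W1 - WS S))\<^sup>2))"
      using nonneg[OF sample_in_space[OF S i]] by simp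
  qed
qed (use i in measurable)

lemma integrable_emp_risk_gd_iter: "integrable Dn (\<lambda>S. emp_risk n f S (gd_iter S k))"
  unfolding emp_risk_def
  by (intro integrable_divide_zero Bochner_Integration.integrable_sum integrable_loss_gd_iter) auto

lemma expected_emp_risk_eq: "expected_emp_risk k = (\<Sum>i<n. expected_sample_loss k i) / real n"
  unfolding expected_emp_risk_def expected_sample_loss_def emp_risk_def
  by (simp add: integral_sum integrable_loss_gd_iter)

lemma opt_emp_risk_le_pop_risk: "opt_emp_risk \<le> pop_risk D f w"
proof -
  have integrable: "integrable Dn (\<lambda>S. f w (S j))" and integral: "(\<integral>S. f w (S j) \<partial>Dn) = pop_risk D f w"
    if "j < n" for j
    using integrable_sample_component_iff[OF that] integral_sample_component[OF that] integrable_loss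
    unfolding pop_risk_def by auto
  have "integrable Dn (\<lambda>S. emp_risk n f S w)"
    unfolding emp_risk_def by (intro integrable_divide_zero Bochner_Integration.integrable_sum integrable) auto
  then have "opt_emp_risk \<le> (\<integral>S. emp_risk n f S w \<partial>Dn)"
    using integrable_emp_risk_min emp_risk_min by (intro integral_mono) auto
  also have "\<dots> = pop_risk D f w"
    unfolding emp_risk_def using n by (simp add: integral_sum integrable integral)
  finally show ?thesis .
qed

lemma expected_emp_risk_last_le: "real T * expected_emp_risk T \<le> real T * opt_emp_risk + \<beta> * init_dist"
proof -
  have "real T * expected_emp_risk T = (\<integral>S. real T * emp_risk n f S (gd_iter S T) \<partial>Dn)"
    unfolding expected_emp_risk_def by simp
  also have "\<dots> \<le> (\<integral>S. real T * emp_risk n f S (WS S) + \<beta> * (norm (W1 - WS S))\<^sup>2 \<partial>Dn)"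
  proof (rule integral_mono)
    fix S assume S: "S \<in> space Dn"
    interpret gd: gd_smooth_convex "emp_risk n f S" "emp_grad S" \<beta> "gd_iter S" "WS S"
      using S by (rule gd_smooth_convex_sample)
    show "real T * emp_risk n f S (gd_iter S T) \<le> real T * emp_risk n f S (WS S) + \<beta> * (norm (W1 - WS S))\<^sup>2"
      using gd.last_iterate_excess_le[of T] by (simp add: algebra_simps)
  qed (use integrable_emp_risk_gd_iter integrable_emp_risk_min integrable_init_dist in auto)
  also have "\<dots> = real T * opt_emp_risk + \<beta> * init_dist"
    using integrable_emp_risk_min integrable_init_dist by simp
  finally show ?thesis .
qed

lemma sum_expected_emp_risk_le:
  "(\<Sum>k<T. expected_emp_risk k) \<le> real T * opt_emp_risk + 3 / 2 * \<beta> * init_dist"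
proof -
  have "(\<Sum>k<T. expected_emp_risk k) = (\<integral>S. (\<Sum>k<T. emp_risk n f S (gd_iter S k)) \<partial>Dn)"
    unfolding expected_emp_risk_def by (simp add: integral_sum integrable_emp_risk_gd_iter)
  also have "\<dots> \<le> (\<integral>S. real T * emp_risk n f S (WS S) + 3 / 2 * \<beta> * (norm (W1 - WS S))\<^sup>2 \<partial>Dn)"
  proof (rule integral_mono)
    fix S assume S: "S \<in> space Dn"
    interpret gd: gd_smooth_convex "emp_risk n f S" "emp_grad S" \<beta> "gd_iter S" "WS S"
      using S by (rule gd_smooth_convex_sample)
    show "(\<Sum>k<T. emp_risk n f S (gd_iter S k))
        \<le> real T * emp_risk n f S (WS S) + 3 / 2 * \<beta> * (norm (W1 - WS S))\<^sup>2"
      using gd.sum_iterates_le[of T] by simp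
  qed (use integrable_emp_risk_gd_iter integrable_emp_risk_min integrable_init_dist in auto)
  also have "\<dots> = real T * opt_emp_risk + 3 / 2 * \<beta> * init_dist"
    using integrable_emp_risk_min integrable_init_dist by simp
  finally show ?thesis .
qed

definition ghost_loss :: "nat \<Rightarrow> nat \<Rightarrow> (nat \<Rightarrow> 'z) \<Rightarrow> real" where
  "ghost_loss k i x = f (gd_iter (restrict x {..<n}) k) (x i)"

lemma ghost_loss_measurable[measurable]: "i \<le> n \<Longrightarrow> ghost_loss k i \<in> borel_measurable Dn1"
  unfolding ghost_loss_def by (rule loss_gd_iter_measurable) (auto intro: measurable_component_singleton)

lemma
  assumes "i < n"
  shows integrable_ghost_loss: "integrable Dn1 (ghost_loss k i)"
    and integral_ghost_loss: "integral\<^sup>L Dn1 (ghost_loss k i) = expected_sample_loss k i"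
proof -
  have restrict: "ghost_loss k i = (\<lambda>x. (\<lambda>S. f (gd_iter S k) (S i)) (restrict x {..<n}))"
    using assms by (simp add: fun_eq_iff ghost_loss_def)
  note measurable = loss_gd_iter_sample_measurable[OF assms, of k]
  show "integrable Dn1 (ghost_loss k i)"
    unfolding restrict integrable_restrict_sample_iff[OF measurable]
    using assms by (rule integrable_loss_gd_iter)
  show "integral\<^sup>L Dn1 (ghost_loss k i) = expected_sample_loss k i"
    unfolding restrict integral_restrict_sample[OF measurable] expected_sample_loss_def ..
qed

lemma
  shows integrable_ghost_pop_risk: "integrable Dn1 (ghost_loss T n)"
    and integral_ghost_pop_risk: "integral\<^sup>L Dn1 (ghost_loss T n) = (\<integral>S. pop_risk D f (gd_iter S T) \<partial>Dn)"
proof -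
  have pop_risk_nonneg: "0 \<le> pop_risk D f w" for w
    unfolding pop_risk_def by (rule Bochner_Integration.integral_nonneg) (use nonneg in auto)
  have "(\<lambda>x. f (gd_iter (restrict x {..<n}) T) (x n)) \<in> borel_measurable Dn1"
    using ghost_loss_measurable[where i = n and k = T] by (simp add: ghost_loss_def[abs_def])
  then have "(\<integral>\<^sup>+x. ghost_loss T n x \<partial>Dn1) = (\<integral>\<^sup>+S. (\<integral>\<^sup>+z. f (gd_iter S T) z \<partial>D) \<partial>Dn)"
    unfolding ghost_loss_def by (rule nn_integral_ghost[where F = "\<lambda>S z. f (gd_iter S T) z"])
  also have "\<dots> = (\<integral>\<^sup>+S. pop_risk D f (gd_iter S T) \<partial>Dn)"
    unfolding pop_risk_def using integrable_loss nonneg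
    by (intro nn_integral_cong nn_integral_eq_integral) auto
  also have "\<dots> = (\<integral>S. pop_risk D f (gd_iter S T) \<partial>Dn)"
    using integrable_pop_risk pop_risk_nonneg by (intro nn_integral_eq_integral) auto
  finally have nn: "(\<integral>\<^sup>+x. ghost_loss T n x \<partial>Dn1) = (\<integral>S. pop_risk D f (gd_iter S T) \<partial>Dn)" .
  have nonneg_ghost: "AE x in Dn1. 0 \<le> ghost_loss T n x"
    by (rule AE_I2) (auto simp: ghost_loss_def intro!: nonneg ghost_sample_in_space)
  show "integrable Dn1 (ghost_loss T n)"
    using nn by (intro integrableI_nn_integral_finite[OF _ nonneg_ghost]) auto
  show "integral\<^sup>L Dn1 (ghost_loss T n) = (\<integral>S. pop_risk D f (gd_iter S T) \<partial>Dn)"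
    using integral_eq_nn_integral[OF _ nonneg_ghost] nn integrable_pop_risk pop_risk_nonneg
    by (simp add: Bochner_Integration.integral_nonneg)
qed

lemma ghost_loss_swap_le:
  assumes i: "i < n" and x: "x \<in> space Dn1"
  shows "\<bar>ghost_loss T n (swap_ghost i x) - ghost_loss T i x\<bar>
    \<le> real T / real n * ghost_loss T i x
      + (1 / (2 * real n) + real T / (2 * (real n)\<^sup>2))
        * (\<Sum>k<T. ghost_loss k i x + ghost_loss k i (swap_ghost i x))"
proof -
  define S where "S = restrict x {..<n}"
  define S' where "S' = restrict (swap_ghost i x) {..<n}"
  have swap: "swap_ghost i x i = x n" "swap_ghost i x n = x i"
    "\<And>j. j < n \<Longrightarrow> j \<noteq> i \<Longrightarrow> swap_ghost i x j = x j"
    using i by (auto simp: swap_ghost_def)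
  have "swap_ghost i x \<in> space Dn1"
    using i x by (intro measurable_space[OF swap_ghost_measurable]) auto
  then have "S j \<in> space D" "S' j \<in> space D" if "j < n" for j
    using that x unfolding S_def S'_def by (auto intro!: ghost_sample_in_space)
  moreover have "S' j = S j" if "j < n" "j \<noteq> i" for j
    using that swap unfolding S_def S'_def by simp
  ultimately have "\<bar>f (gd_iter S' T) (S i) - f (gd_iter S T) (S i)\<bar>
    \<le> real T / real n * f (gd_iter S T) (S i)
      + (1 / (2 * real n) + real T / (2 * (real n)\<^sup>2))
        * (\<Sum>k<T. f (gd_iter S k) (S i) + f (gd_iter S' k) (S' i))"
    using i by (intro loss_replace_one_le) auto
  then show ?thesis
    using i swap unfolding ghost_loss_def S_def S'_def by (simp add: swap_ghost_def)
qed

lemma integral_ghost_swap_diff_le: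
  assumes i: "i < n"
  shows "\<bar>(\<integral>x. ghost_loss T n (swap_ghost i x) \<partial>Dn1) - expected_sample_loss T i\<bar>
    \<le> real T / real n * expected_sample_loss T i
      + (1 / real n + real T / (real n)\<^sup>2) * (\<Sum>k<T. expected_sample_loss k i)"
proof -
  define c where "c = 1 / (2 * real n) + real T / (2 * (real n)\<^sup>2)"
  have i_le: "i \<le> n" using i by simp
  have loss: "integrable Dn1 (ghost_loss k i)" "integral\<^sup>L Dn1 (ghost_loss k i) = expected_sample_loss k i"
    for k using i by (rule integrable_ghost_loss, rule integral_ghost_loss)
  have swapped_loss: "integrable Dn1 (\<lambda>x. ghost_loss k i (swap_ghost i x))"
    "(\<integral>x. ghost_loss k i (swap_ghost i x) \<partial>Dn1) = expected_sample_loss k i" for k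
    using loss[of k] i_le
    by (simp_all add: integrable_swap_ghost_iff integral_swap_ghost)
  have swapped_pop_risk: "integrable Dn1 (\<lambda>x. ghost_loss T n (swap_ghost i x))"
    using integrable_ghost_pop_risk i_le by (simp add: integrable_swap_ghost_iff)
  have "\<bar>(\<integral>x. ghost_loss T n (swap_ghost i x) \<partial>Dn1) - expected_sample_loss T i\<bar>
      = \<bar>\<integral>x. ghost_loss T n (swap_ghost i x) - ghost_loss T i x \<partial>Dn1\<bar>"
    using swapped_pop_risk loss[of T] by simp
  also have "\<dots> \<le> (\<integral>x. \<bar>ghost_loss T n (swap_ghost i x) - ghost_loss T i x\<bar> \<partial>Dn1)"
    by (rule integral_abs_bound)
  also have "\<dots> \<le> (\<integral>x. real T / real n * ghost_loss T i x
      + c * (\<Sum>k<T. ghost_loss k i x + ghost_loss k i (swap_ghost i x)) \<partial>Dn1)"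
    unfolding c_def
  proof (rule integral_mono)
    show "integrable Dn1 (\<lambda>x. \<bar>ghost_loss T n (swap_ghost i x) - ghost_loss T i x\<bar>)"
      using swapped_pop_risk loss(1)[of T] by (intro integrable_abs Bochner_Integration.integrable_diff)
  qed (use loss swapped_loss ghost_loss_swap_le[OF i] in auto)
  also have "\<dots> = real T / real n * expected_sample_loss T i + c * (\<Sum>k<T. 2 * expected_sample_loss k i)"
    using loss swapped_loss by (simp add: integral_sum)
  also have "\<dots> = real T / real n * expected_sample_loss T i
      + (1 / real n + real T / (real n)\<^sup>2) * (\<Sum>k<T. expected_sample_loss k i)"
    unfolding c_def by (simp add: sum_distrib_left[symmetric] field_simps)
  finally show ?thesis .
qed

lemma expected_gen_gap_le:
  "\<bar>\<integral>S. pop_risk D f (gd_iter S T) - emp_risk n f S (gd_iter S T) \<partial>Dn\<bar>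
    \<le> real T / real n * expected_emp_risk T
      + (1 / real n + real T / (real n)\<^sup>2) * (\<Sum>k<T. expected_emp_risk k)"
proof -
  define c where "c = 1 / real n + real T / (real n)\<^sup>2"
  define P where "P i = (\<integral>x. ghost_loss T n (swap_ghost i x) \<partial>Dn1)" for i
  have P: "P i = (\<integral>S. pop_risk D f (gd_iter S T) \<partial>Dn)" if "i < n" for i
    unfolding P_def using that by (simp add: integral_swap_ghost integral_ghost_pop_risk)
  have "(\<integral>S. pop_risk D f (gd_iter S T) - emp_risk n f S (gd_iter S T) \<partial>Dn)
      = (\<integral>S. pop_risk D f (gd_iter S T) \<partial>Dn) - expected_emp_risk T"
    unfolding expected_emp_risk_def using integrable_pop_risk integrable_emp_risk_gd_iter by simp
  also have "\<dots> = (\<Sum>i<n. P i - expected_sample_loss T i) / real n"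
    using n by (simp add: P expected_emp_risk_eq sum_subtractf field_simps)
  finally have "\<bar>\<integral>S. pop_risk D f (gd_iter S T) - emp_risk n f S (gd_iter S T) \<partial>Dn\<bar>
      = \<bar>\<Sum>i<n. P i - expected_sample_loss T i\<bar> / real n"
    by simp
  also have "\<dots> \<le> (\<Sum>i<n. \<bar>P i - expected_sample_loss T i\<bar>) / real n"
    by (intro divide_right_mono sum_abs) auto
  also have "\<dots> \<le> (\<Sum>i<n. real T / real n * expected_sample_loss T i
      + c * (\<Sum>k<T. expected_sample_loss k i)) / real n"
    unfolding P_def c_def by (intro divide_right_mono sum_mono integral_ghost_swap_diff_le) auto
  also have "\<dots> = (real T / real n * (\<Sum>i<n. expected_sample_loss T i)
      + c * (\<Sum>k<T. \<Sum>i<n. expected_sample_loss k i)) / real n"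
    by (simp add: sum.distrib sum_distrib_left sum.swap[of _ "{..<T}"])
  also have "\<dots> = real T / real n * expected_emp_risk T + c * (\<Sum>k<T. expected_emp_risk k)"
    unfolding expected_emp_risk_eq sum_divide_distrib[symmetric] by (simp add: add_divide_distrib)
  finally show ?thesis unfolding c_def .
qed

lemma opt_emp_risk_nonneg: "0 \<le> opt_emp_risk"
  by (rule Bochner_Integration.integral_nonneg) (use emp_risk_nonneg in auto)

lemma generalization_bound:
  "\<bar>\<integral>S. pop_risk D f (gd_iter S T) - emp_risk n f S (gd_iter S T) \<partial>Dn\<bar>
    \<le> 8 * (1 / real n + 2 * real T / (real n)\<^sup>2) * (3 * \<beta> * init_dist + real T * opt_emp_risk)"
proof -
  define a where "a = 1 / real n"
  define b where "b = real T / (real n)\<^sup>2"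
  define X where "X = real T * opt_emp_risk"
  define Y where "Y = \<beta> * init_dist"
  have nonneg: "0 \<le> a" "0 \<le> b" "0 \<le> X" "0 \<le> Y"
    unfolding a_def b_def X_def Y_def using beta opt_emp_risk_nonneg by auto
  have "real T / real n * expected_emp_risk T \<le> a * (X + Y)"
    unfolding a_def X_def Y_def using expected_emp_risk_last_le n
    by (simp add: divide_right_mono)
  moreover have "(a + b) * (\<Sum>k<T. expected_emp_risk k) \<le> (a + b) * (X + 3 / 2 * Y)"
    unfolding X_def Y_def using sum_expected_emp_risk_le nonneg by (intro mult_left_mono) auto
  moreover have "a * (X + Y) + (a + b) * (X + 3 / 2 * Y) \<le> 8 * (a + 2 * b) * (3 * Y + X)"
    using mult_nonneg_nonneg[OF nonneg(1) nonneg(3)] mult_nonneg_nonneg[OF nonneg(1) nonneg(4)]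
      mult_nonneg_nonneg[OF nonneg(2) nonneg(3)] mult_nonneg_nonneg[OF nonneg(2) nonneg(4)]
    by (simp add: algebra_simps)
  ultimately show ?thesis
    using expected_gen_gap_le unfolding a_def b_def X_def Y_def by (simp add: mult.assoc)
qed

lemma excess_risk_bound:
  assumes "T \<ge> 1"
  shows "(\<integral>S. pop_risk D f (gd_iter S T) \<partial>Dn) - pop_risk D f w
    \<le> 8 * (1 / real n + 2 * real T / (real n)\<^sup>2) * (3 * \<beta> * init_dist + real T * opt_emp_risk)
      + 3 * \<beta> * init_dist / real T"
proof -
  have "(\<integral>S. pop_risk D f (gd_iter S T) \<partial>Dn)
      = (\<integral>S. pop_risk D f (gd_iter S T) - emp_risk n f S (gd_iter S T) \<partial>Dn) + expected_emp_risk T"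
    unfolding expected_emp_risk_def using integrable_pop_risk integrable_emp_risk_gd_iter by simp
  moreover have "expected_emp_risk T \<le> opt_emp_risk + \<beta> * init_dist / real T"
    using expected_emp_risk_last_le assms by (simp add: field_simps)
  moreover have "\<beta> * init_dist / real T \<le> 3 * \<beta> * init_dist / real T"
    using beta by (intro divide_right_mono) (auto intro: Bochner_Integration.integral_nonneg)
  ultimately show ?thesis
    using generalization_bound opt_emp_risk_le_pop_risk[of w] by (simp add: abs_le_iff)
qed

end

theorem theorem12:
  fixes D :: "'z measure"
    and f :: "'a::euclidean_space \<Rightarrow> 'z \<Rightarrow> real"
    and g :: "'a \<Rightarrow> 'z \<Rightarrow> 'a"
    and \<beta> :: real and n T :: nat and W1 wstar :: 'a
    and WS :: "(nat \<Rightarrow> 'z) \<Rightarrow> 'a"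
  defines "Smeas \<equiv> PiM {..<n} (\<lambda>_. D)"
    and "A \<equiv> (\<lambda>S. gd g (\<lambda>_. 1 / (2 * \<beta>)) n W1 S T)"
    and "B \<equiv> 8 * (1 / real n + 2 * real T / (real n)\<^sup>2) *
               (3 * \<beta> * (\<integral>S. (norm (W1 - WS S))\<^sup>2 \<partial>PiM {..<n} (\<lambda>_. D))
                + real T * (\<integral>S. emp_risk n f S (WS S) \<partial>PiM {..<n} (\<lambda>_. D)))"
  assumes D: "prob_space D"
    and n: "n > 0"
    and T: "T \<ge> 1"
    and beta: "\<beta> > 0"
    and nonneg: "\<And>w z. z \<in> space D \<Longrightarrow> f w z \<ge> 0"
    and grad: "\<And>w z. z \<in> space D \<Longrightarrow> ((\<lambda>v. f v z) has_derivative (\<lambda>h. g w z \<bullet> h)) (at w)"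
    and convex: "\<And>z. z \<in> space D \<Longrightarrow> convex_on UNIV (\<lambda>w. f w z)"
    and smooth: "\<And>w u z. z \<in> space D \<Longrightarrow> norm (g w z - g u z) \<le> \<beta> * norm (w - u)"
    and integ_f: "\<And>w. integrable D (f w)"
    and wstar: "\<And>w. pop_risk D f wstar \<le> pop_risk D f w"
    and WS: "\<And>S w. S \<in> space Smeas \<Longrightarrow> emp_risk n f S (WS S) \<le> emp_risk n f S w"
    and integ1: "integrable Smeas (\<lambda>S. pop_risk D f (A S))"
    and integ2: "integrable Smeas (\<lambda>S. emp_risk n f S (A S))"
    and integ3: "integrable Smeas (\<lambda>S. emp_risk n f S (WS S))"
    and integ4: "integrable Smeas (\<lambda>S. (norm (W1 - WS S))\<^sup>2)"
  shows "\<bar>(\<integral>S. pop_risk D f (A S) - emp_risk n f S (A S) \<partial>Smeas)\<bar> \<le> B \<and>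
         (\<integral>S. pop_risk D f (A S) \<partial>Smeas) - pop_risk D f wstar
           \<le> B + 3 * \<beta> * (\<integral>S. (norm (W1 - WS S))\<^sup>2 \<partial>Smeas) / real T"
proof -
  interpret gd_generalization f g \<beta> n D W1 WS T
    by (intro gd_generalization.intro iid_smooth_convex_loss.intro smooth_convex_loss.intro
        iid_smooth_convex_loss_axioms.intro gd_generalization_axioms.intro)
      (fact D n beta nonneg grad convex smooth integ_f WS[unfolded Smeas_def]
        integ1[unfolded Smeas_def A_def] integ3[unfolded Smeas_def] integ4[unfolded Smeas_def])+
  show ?thesis
    unfolding Smeas_def A_def B_def
    by (intro conjI generalization_bound excess_risk_bound[OF T])
qed

end
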